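(* Let $\Phi=(\phi_1,\dots,\phi_K)$, $\phi_i\in\mathbb{R}^d$, be a unit norm tight frame with frame constant $A=K/d$ and coherence $\mu$. Let $c\in\mathbb{R}^K$ satisfy $c_1\ge c_2\ge\dots\ge c_K\ge 0$ and $\|c\|_2=1$, and let $x=c_{p,\sigma}$ with probability $(2^K K!)^{-1}$ for each permutation $p$ of $\{1,\dots,K\}$ and each sign sequence $\sigma\in\{-1,1\}^K$; set $y=\Phi x$. If $c_1>c_2+2\mu\|c\|_1$, then $\Phi$ is a local maximum of $$\max_{\Psi\in\mathcal D}\ \mathbb{E}_y\big(\|\Psi^\star y\|_\infty^2\big).$$ Moreover, for every $\Psi=(\psi_1,\dots,\psi_K)\in\mathcal D$ with $0<\max_i\|\psi_i-\phi_i\|_2\le\varepsilon$ we have $\mathbb{E}_x\|\Psi^\star\Phi x\|_\infty^2<\mathbb{E}_x\|\Phi^\star\Phi x\|_\infty^2$ as soon as $\varepsilon<1/5$ and $$\varepsilon\le\frac{\Big(1-2\frac{c_2+\mu\|c\|_1}{c_2+c_1}\Big)^2}{2A\log\Big(2AK\big/\big(c_1^2-\frac{1-c_1^2}{K-1}\big)\Big)}.$$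
   Context: $\mathcal D$ denotes the set of dictionaries $\Psi=(\psi_1,\dots,\psi_K)$ with $\psi_i\in\mathbb{R}^d$, $\|\psi_i\|_2=1$. A unit norm tight frame with frame constant $A$ is a dictionary in $\mathcal D$ with $\sum_{i=1}^K|\langle\phi_i,v\rangle|^2=A\|v\|_2^2$ for all $v\in\mathbb{R}^d$ (so $A=K/d$). The coherence is $\mu=\max_{i\neq j}|\langle\phi_i,\phi_j\rangle|$. For a sequence $c\in\mathbb{R}^K$, a permutation $p$ and signs $\sigma$, $c_{p,\sigma}\in\mathbb{R}^K$ is defined componentwise by $c_{p,\sigma}(i)=\sigma_i c_{p(i)}$. $\Psi^\star$ denotes the transpose. *)

theory Defs
  imports "HOL-Analysis.Analysis" "HOL-Combinatorics.Permutations"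
begin

definition dicts :: "nat \<Rightarrow> (nat \<Rightarrow> real^'d) set" where
  "dicts K = {\<Psi>. \<forall>i<K. norm (\<Psi> i) = 1}"

definition is_tight_frame :: "nat \<Rightarrow> (nat \<Rightarrow> real^'d) \<Rightarrow> real \<Rightarrow> bool" where
  "is_tight_frame K \<Phi> A \<longleftrightarrow> (\<forall>v::real^'d. (\<Sum>i<K. (\<Phi> i \<bullet> v)^2) = A * (norm v)^2)"

definition is_untf :: "nat \<Rightarrow> (nat \<Rightarrow> real^'d) \<Rightarrow> real \<Rightarrow> bool" where
  "is_untf K \<Phi> A \<longleftrightarrow> \<Phi> \<in> dicts K \<and> is_tight_frame K \<Phi> A"

definition coherence :: "nat \<Rightarrow> (nat \<Rightarrow> real^'d) \<Rightarrow> real" where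
  "coherence K \<Phi> = Max {\<bar>\<Phi> i \<bullet> \<Phi> j\<bar> | i j. i < K \<and> j < K \<and> i \<noteq> j}"

definition synth :: "nat \<Rightarrow> (nat \<Rightarrow> real^'d) \<Rightarrow> (nat \<Rightarrow> real) \<Rightarrow> real^'d" where
  "synth K \<Phi> x = (\<Sum>i<K. x i *\<^sub>R \<Phi> i)"

definition analysis_supnorm :: "nat \<Rightarrow> (nat \<Rightarrow> real^'d) \<Rightarrow> real^'d \<Rightarrow> real" where
  "analysis_supnorm K \<Psi> y = Max ((\<lambda>i. \<bar>\<Psi> i \<bullet> y\<bar>) ` {..<K})"

definition permsign :: "(nat \<Rightarrow> real) \<Rightarrow> (nat \<Rightarrow> nat) \<Rightarrow> (nat \<Rightarrow> real) \<Rightarrow> nat \<Rightarrow> real" where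
  "permsign c p \<sigma> i = \<sigma> i * c (p i)"

definition sign_seqs :: "nat \<Rightarrow> (nat \<Rightarrow> real) set" where
  "sign_seqs K = {..<K} \<rightarrow>\<^sub>E {-1, 1}"

definition expected_obj :: "nat \<Rightarrow> (nat \<Rightarrow> real) \<Rightarrow> (nat \<Rightarrow> real^'d) \<Rightarrow> (nat \<Rightarrow> real^'d) \<Rightarrow> real" where
  "expected_obj K c \<Phi> \<Psi> =
     (\<Sum>p\<in>{p. p permutes {..<K}}. \<Sum>\<sigma>\<in>sign_seqs K.
        (analysis_supnorm K \<Psi> (synth K \<Phi> (permsign c p \<sigma>)))^2) / (2^K * fact K)"

definition dict_dist :: "nat \<Rightarrow> (nat \<Rightarrow> real^'d) \<Rightarrow> (nat \<Rightarrow> real^'d) \<Rightarrow> real" where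
  "dict_dist K \<Psi> \<Phi> = Max ((\<lambda>i. norm (\<Psi> i - \<Phi> i)) ` {..<K})"

end

theory Submission
  imports Defs "HOL-Probability.Hoeffding"
begin

text \<open>Indices as in the paper, so \<open>c\<^sub>1\<close> is \<open>c 0\<close>. Write \<open>y = \<Phi> x\<close> with \<open>x = c\<^sub>p\<^sub>,\<^sub>\<sigma>\<close> and
  let the peak atom \<open>i\<^sub>p\<close> be the position of \<open>c\<^sub>1\<close> in \<open>x\<close>. Since
  \<open>\<langle>\<phi>\<^sub>k, y\<rangle>\<close> differs from \<open>x\<^sub>k\<close> by at most \<open>\<mu>\<parallel>c\<parallel>\<^sub>1\<close>, the gap condition makes \<open>|\<langle>\<phi>\<^sub>i\<^sub>p, y\<rangle>|\<close>
  exceed every other entry of \<open>\<Phi>\<^sup>* y\<close> by the margin \<open>G = c\<^sub>1 - c\<^sub>2 - 2\<mu>\<parallel>c\<parallel>\<^sub>1 > 0\<close>. For a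
  perturbed dictionary \<open>\<Psi>\<close> the maximum therefore stays at \<open>i\<^sub>p\<close> unless some
  \<open>|\<langle>\<psi>\<^sub>k - \<phi>\<^sub>k, y\<rangle>| \<ge> G/2\<close>. Comparing both objectives with the energy at \<open>i\<^sub>p\<close>, averaging over
  signs and permutations and using the tight frame identity, the loss is
  \<open>Q \<Sum>\<^sub>k (1 - \<langle>\<psi>\<^sub>k, \<phi>\<^sub>k\<rangle>\<^sup>2)\<close> up to normalisation, with \<open>Q = c\<^sub>1\<^sup>2 - (1 - c\<^sub>1\<^sup>2)/(K - 1) > 0\<close>,
  while the rare sign patterns with a large deviation cost at most \<open>A\<close> each and, by
  Hoeffding's inequality, have probability \<open>\<le> 2 exp (-G\<^sup>2 / (8 c\<^sub>1\<^sup>2 A \<parallel>\<psi>\<^sub>k - \<phi>\<^sub>k\<parallel>\<^sup>2))\<close>. The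
  bound on \<open>\<epsilon>\<close> is what makes this exponentially small term lose against the quadratic
  loss \<open>\<parallel>\<psi>\<^sub>k - \<phi>\<^sub>k\<parallel>\<^sup>2 (1 - \<parallel>\<psi>\<^sub>k - \<phi>\<^sub>k\<parallel>\<^sup>2/4) = 1 - \<langle>\<psi>\<^sub>k, \<phi>\<^sub>k\<rangle>\<^sup>2\<close>.\<close>

section \<open>Tight frames and coherence\<close>

lemma inner_synth: "w \<bullet> synth K \<Phi> x = (\<Sum>j<K. x j * (w \<bullet> \<Phi> j))"
  unfolding synth_def by (simp add: inner_sum_right)

lemma tight_frame_bound_nonneg:
  fixes \<Phi> :: "nat \<Rightarrow> real^'d"
  assumes "is_tight_frame K \<Phi> A"
  shows "0 \<le> A"
proof -
  obtain v :: "real^'d" where "norm v = 1"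
    using vector_choose_size[of 1] by auto
  then have "A = (\<Sum>j<K. (\<Phi> j \<bullet> v)^2)"
    using assms unfolding is_tight_frame_def by simp
  then show ?thesis by (simp add: sum_nonneg)
qed

lemma tight_frame_synth_norm_le:
  assumes "is_tight_frame K \<Phi> A"
  shows "(norm (synth K \<Phi> x))^2 \<le> A * (\<Sum>j<K. (x j)^2)"
proof -
  define y where "y = synth K \<Phi> x"
  define S where "S = (\<Sum>j<K. (x j)^2)"
  have "(norm y)^2 = y \<bullet> synth K \<Phi> x"
    by (simp add: power2_norm_eq_inner y_def)
  also have "\<dots> = (\<Sum>j<K. x j * (y \<bullet> \<Phi> j))"
    by (rule inner_synth)
  finally have "((norm y)^2)^2 \<le> S * (\<Sum>j<K. (y \<bullet> \<Phi> j)^2)"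
    unfolding S_def by (metis Cauchy_Schwarz_ineq_sum)
  also have "(\<Sum>j<K. (y \<bullet> \<Phi> j)^2) = A * (norm y)^2"
    using assms unfolding is_tight_frame_def by (simp add: inner_commute)
  finally have le: "(norm y)^2 * (norm y)^2 \<le> (A * S) * (norm y)^2"
    by (simp add: power2_eq_square mult.commute mult.left_commute)
  have "0 \<le> A * S"
    using tight_frame_bound_nonneg[OF assms] unfolding S_def by (simp add: sum_nonneg)
  then show ?thesis
    using le mult_right_le_imp_le[of "(norm y)^2" "(norm y)^2" "A * S"]
    unfolding y_def[symmetric] S_def[symmetric] by (cases "norm y = 0") auto
qed

lemma untf_bound_ge_1:
  assumes "is_untf K \<Phi> A" "0 < K"
  shows "1 \<le> A"
proof -
  have unit: "norm (\<Phi> 0) = 1"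
    using assms unfolding is_untf_def dicts_def by auto
  then have "\<Phi> 0 \<bullet> \<Phi> 0 = 1"
    by (metis norm_eq_sqrt_inner real_sqrt_eq_1_iff)
  then have "1 \<le> (\<Sum>j<K. (\<Phi> j \<bullet> \<Phi> 0)^2)"
    using member_le_sum[of 0 "{..<K}" "\<lambda>j. (\<Phi> j \<bullet> \<Phi> 0)^2"] assms(2) by simp
  also have "\<dots> = A"
    using assms(1) unit unfolding is_untf_def is_tight_frame_def by simp
  finally show ?thesis .
qed

lemma coherence_ge:
  assumes "i < K" "j < K" "i \<noteq> j"
  shows "\<bar>\<Phi> i \<bullet> \<Phi> j\<bar> \<le> coherence K \<Phi>"
proof -
  have "finite {\<bar>\<Phi> i \<bullet> \<Phi> j\<bar> | i j. i < K \<and> j < K \<and> i \<noteq> j}"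
    by (rule finite_subset[of _ "(\<lambda>(i, j). \<bar>\<Phi> i \<bullet> \<Phi> j\<bar>) ` ({..<K} \<times> {..<K})"]) auto
  then show ?thesis
    unfolding coherence_def using assms by (intro Max_ge) auto
qed

lemma coherence_nonneg: "2 \<le> K \<Longrightarrow> 0 \<le> coherence K \<Phi>"
  using coherence_ge[of 0 K 1 \<Phi>] by linarith

lemma one_minus_inner_sq_unit:
  fixes u w :: "'a::real_inner"
  assumes "norm u = 1" "norm w = 1"
  shows "1 - (u \<bullet> w)^2 = (norm (u - w))^2 * (1 - (norm (u - w))^2 / 4)"
proof -
  have "u \<bullet> u = 1" "w \<bullet> w = 1"
    using assms by (metis power2_norm_eq_inner power_one)+
  then have "(norm (u - w))^2 = 2 - 2 * (u \<bullet> w)"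
    by (simp add: power2_norm_eq_inner inner_diff_left inner_diff_right inner_commute)
  then have uw: "u \<bullet> w = 1 - (norm (u - w))^2 / 2"
    by linarith
  show ?thesis
    unfolding uw by (simp add: power2_eq_square field_simps)
qed

section \<open>Sums over permutations\<close>

lemma permutes_lessThan_lt: "p permutes {..<K} \<Longrightarrow> j < K \<Longrightarrow> p j < K"
  using permutes_in_image by fastforce

lemma sum_permutes_lessThan: "p permutes {..<K} \<Longrightarrow> (\<Sum>j<K. f (p j)) = (\<Sum>j<K. f j)"
  using sum.permute[of p "{..<K}" f] by (simp add: o_def)

lemma sum_permutations_pair_cong:
  assumes "a < K" "m < K" "m' < K" "m \<noteq> a" "m' \<noteq> a"
  shows "(\<Sum>p\<in>{p. p permutes {..<K::nat}}. F (p a) (p m))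
       = (\<Sum>p\<in>{p. p permutes {..<K}}. F (p a) (p m'))"
proof -
  have "Transposition.transpose m m' permutes {..<K}"
    using assms by (intro permutes_swap_id) auto
  from sum_permutations_compose_right[OF this, of "\<lambda>p. F (p a) (p m)"] assms show ?thesis
    by simp
qed

lemma sum_permutations_apply:
  assumes "m < K"
  shows "(\<Sum>p\<in>{p. p permutes {..<K::nat}}. h (p m)) = fact (K - 1) * (\<Sum>i<K. h i :: real)"
proof -
  let ?P = "{p. p permutes {..<K::nat}}"
  have same: "(\<Sum>p\<in>?P. h (p m')) = (\<Sum>p\<in>?P. h (p m))" if "m' < K" for m'
  proof -
    have "Transposition.transpose m m' permutes {..<K}"
      using that assms by (intro permutes_swap_id) auto
    from sum_permutations_compose_right[OF this, of "\<lambda>p. h (p m')"] show ?thesis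
      by simp
  qed
  have "real K * (\<Sum>p\<in>?P. h (p m)) = (\<Sum>m'<K. \<Sum>p\<in>?P. h (p m'))"
    using same by simp
  also have "\<dots> = (\<Sum>p\<in>?P. \<Sum>m'<K. h (p m'))"
    by (rule sum.swap)
  also have "\<dots> = fact K * (\<Sum>i<K. h i)"
    by (simp add: sum_permutes_lessThan card_permutations)
  also have "fact K = real K * fact (K - 1)"
    using assms by (metis fact_reduce of_nat_fact gr_zeroI not_less0)
  finally show ?thesis
    using assms by simp
qed

lemma sum_permutations_inv_reindex:
  "(\<Sum>p\<in>{p. p permutes {..<K}}. \<Sum>j<K. f (p j) * D (inv p a) j)
     = (\<Sum>p\<in>{p. p permutes {..<K}}. \<Sum>m<K. f m * D (p a) (p m))"
proof -
  let ?P = "{p. p permutes {..<K}}"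
  have "(\<Sum>j<K. f (p j) * D (inv p a) j) = (\<Sum>m<K. f m * D (inv p a) (inv p m))"
    if "p \<in> ?P" for p
    using that sum_permutes_lessThan[OF permutes_inv, of p K "\<lambda>j. f (p j) * D (inv p a) j"]
    by (simp add: permutes_inverses(1))
  then have "(\<Sum>p\<in>?P. \<Sum>j<K. f (p j) * D (inv p a) j)
      = (\<Sum>p\<in>?P. \<Sum>m<K. f m * D (inv p a) (inv p m))"
    by (rule sum.cong[OF refl])
  also have "\<dots> = (\<Sum>p\<in>?P. \<Sum>m<K. f m * D (inv (inv p) a) (inv (inv p) m))"
    by (rule sum_permutations_inverse)
  also have "\<dots> = (\<Sum>p\<in>?P. \<Sum>m<K. f m * D (p a) (p m))"
    by (intro sum.cong refl) (simp add: permutes_inv_inv)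
  finally show ?thesis .
qed

text \<open>With zero row sums, the \<open>K - 1\<close> equal off-diagonal averages cancel the diagonal one.\<close>

lemma sum_permutations_offdiag:
  assumes "0 < m" "m < K" and rows: "\<And>i. i < K \<Longrightarrow> (\<Sum>j<K. D i j) = (0::real)"
  shows "(\<Sum>p\<in>{p. p permutes {..<K}}. D (p 0) (p m))
       = - fact (K - 1) * (\<Sum>i<K. D i i) / (real K - 1)"
proof -
  let ?P = "{p. p permutes {..<K}}"
  have "(\<Sum>m'\<in>{1..<K}. \<Sum>p\<in>?P. D (p 0) (p m')) = (\<Sum>m'\<in>{1..<K}. \<Sum>p\<in>?P. D (p 0) (p m))"
    using assms(1,2) by (intro sum.cong[OF refl] sum_permutations_pair_cong) auto
  then have "(real K - 1) * (\<Sum>p\<in>?P. D (p 0) (p m)) = (\<Sum>m'\<in>{1..<K}. \<Sum>p\<in>?P. D (p 0) (p m'))"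
    using assms(2) by (simp add: of_nat_diff)
  also have "\<dots> = (\<Sum>p\<in>?P. \<Sum>m'\<in>{1..<K}. D (p 0) (p m'))"
    by (rule sum.swap)
  also have "\<dots> = (\<Sum>p\<in>?P. - D (p 0) (p 0))"
  proof (rule sum.cong[OF refl])
    fix p assume "p \<in> ?P"
    then have p: "p permutes {..<K}" by simp
    have "{..<K} = insert 0 {1..<K}" using assms(2) by auto
    then have "D (p 0) (p 0) + (\<Sum>m'\<in>{1..<K}. D (p 0) (p m')) = (\<Sum>j<K. D (p 0) (p j))"
      by simp
    also have "\<dots> = 0"
      using sum_permutes_lessThan[OF p, of "D (p 0)"] rows[OF permutes_lessThan_lt[OF p]] assms by simp
    finally show "(\<Sum>m'\<in>{1..<K}. D (p 0) (p m')) = - D (p 0) (p 0)" by simp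
  qed
  also have "\<dots> = - (fact (K - 1) * (\<Sum>i<K. D i i))"
    using sum_permutations_apply[of 0 K "\<lambda>i. D i i"] assms by (simp add: sum_negf)
  finally show ?thesis
    using assms by (simp add: field_simps)
qed

lemma sum_permutations_weighted:
  fixes w :: "nat \<Rightarrow> real"
  assumes "2 \<le> K" and rows: "\<And>i. i < K \<Longrightarrow> (\<Sum>j<K. D i j) = 0"
  shows "(\<Sum>p\<in>{p. p permutes {..<K}}. \<Sum>m<K. w m * D (p 0) (p m))
       = fact (K - 1) * (w 0 - (\<Sum>m\<in>{1..<K}. w m) / (real K - 1)) * (\<Sum>i<K. D i i)"
proof -
  let ?P = "{p. p permutes {..<K}}"
  have split: "{..<K} - {0} = {1..<K}" by auto
  have "(\<Sum>p\<in>?P. \<Sum>m<K. w m * D (p 0) (p m)) = (\<Sum>m<K. w m * (\<Sum>p\<in>?P. D (p 0) (p m)))"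
    by (simp add: sum.swap[of _ ?P] sum_distrib_left)
  also have "\<dots> = w 0 * (\<Sum>p\<in>?P. D (p 0) (p 0)) + (\<Sum>m\<in>{1..<K}. w m * (\<Sum>p\<in>?P. D (p 0) (p m)))"
    using assms by (simp add: sum.remove[of "{..<K}" 0] split)
  also have "(\<Sum>p\<in>?P. D (p 0) (p 0)) = fact (K - 1) * (\<Sum>i<K. D i i)"
    using sum_permutations_apply[of 0 K "\<lambda>i. D i i"] assms by simp
  also have "(\<Sum>m\<in>{1..<K}. w m * (\<Sum>p\<in>?P. D (p 0) (p m)))
      = (\<Sum>m\<in>{1..<K}. w m) * (- fact (K - 1) * (\<Sum>i<K. D i i) / (real K - 1))"
    using sum_permutations_offdiag[of _ K D] rows
    by (simp add: sum_distrib_right sum_divide_distrib sum_negf)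
  finally show ?thesis
    by (simp add: field_simps)
qed

section \<open>Sums over sign sequences\<close>

lemma sign_seqs_abs: "\<sigma> \<in> sign_seqs K \<Longrightarrow> j < K \<Longrightarrow> \<bar>\<sigma> j\<bar> = 1"
  unfolding sign_seqs_def by (force simp: PiE_iff)

lemma finite_sign_seqs: "finite (sign_seqs K)"
  unfolding sign_seqs_def by (intro finite_PiE) auto

lemma card_sign_seqs: "card (sign_seqs K) = 2 ^ K"
  unfolding sign_seqs_def by (simp add: card_PiE numeral_2_eq_2)

lemma sum_sign_seqs_mult:
  assumes "j < K" "l < K" "j \<noteq> l"
  shows "(\<Sum>\<sigma>\<in>sign_seqs K. \<sigma> j * \<sigma> l) = 0"
proof -
  define flip where "flip = (\<lambda>\<sigma>::nat \<Rightarrow> real. \<sigma>(j := - \<sigma> j))"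
  have flip_in: "flip \<sigma> \<in> sign_seqs K" if "\<sigma> \<in> sign_seqs K" for \<sigma>
    using that assms unfolding flip_def sign_seqs_def by (auto simp: PiE_iff extensional_def)
  have "(\<Sum>\<sigma>\<in>sign_seqs K. \<sigma> j * \<sigma> l) = (\<Sum>\<sigma>\<in>sign_seqs K. flip \<sigma> j * flip \<sigma> l)"
    using flip_in by (intro sum.reindex_bij_witness[of _ flip flip]) (auto simp: flip_def)
  also have "\<dots> = - (\<Sum>\<sigma>\<in>sign_seqs K. \<sigma> j * \<sigma> l)"
    using assms by (simp add: flip_def sum_negf[symmetric])
  finally show ?thesis by simp
qed

lemma sum_sign_seqs_square:
  "(\<Sum>\<sigma>\<in>sign_seqs K. (\<Sum>j<K. \<sigma> j * a j)^2) = 2^K * (\<Sum>j<K. (a j)^2)"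
proof -
  have diag: "(\<Sum>l<K. (\<Sum>\<sigma>\<in>sign_seqs K. \<sigma> j * \<sigma> l) * (a j * a l)) = 2^K * (a j)^2"
    if j: "j < K" for j
  proof -
    have "(\<Sum>l<K. (\<Sum>\<sigma>\<in>sign_seqs K. \<sigma> j * \<sigma> l) * (a j * a l))
        = (\<Sum>\<sigma>\<in>sign_seqs K. \<sigma> j * \<sigma> j) * (a j * a j)"
      using j sum_sign_seqs_mult by (subst sum.mono_neutral_right[of "{..<K}" "{j}"]) auto
    also have "(\<Sum>\<sigma>\<in>sign_seqs K. \<sigma> j * \<sigma> j) = (\<Sum>\<sigma>\<in>sign_seqs K. 1)"
      using j unfolding sign_seqs_def by (intro sum.cong refl) (force simp: PiE_iff)
    finally show ?thesis
      by (simp add: card_sign_seqs power2_eq_square)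
  qed
  have "(\<Sum>\<sigma>\<in>sign_seqs K. (\<Sum>j<K. \<sigma> j * a j)^2)
      = (\<Sum>\<sigma>\<in>sign_seqs K. \<Sum>j<K. \<Sum>l<K. (\<sigma> j * \<sigma> l) * (a j * a l))"
    by (simp add: power2_eq_square sum_product algebra_simps)
  also have "\<dots> = (\<Sum>j<K. \<Sum>l<K. (\<Sum>\<sigma>\<in>sign_seqs K. \<sigma> j * \<sigma> l) * (a j * a l))"
    by (simp add: sum.swap[of _ "sign_seqs K"] sum_distrib_right)
  also have "\<dots> = (\<Sum>j<K. 2^K * (a j)^2)"
    using diag by simp
  finally show ?thesis
    by (simp add: sum_distrib_left)
qed

text \<open>\<open>cosh x \<le> exp (x\<^sup>2/2)\<close>, read off from Hoeffding's lemma with \<open>p = 1/2\<close> and \<open>h = 2|x|\<close>.\<close>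

lemma exp_add_exp_minus_le:
  fixes x :: real
  shows "exp x + exp (- x) \<le> 2 * exp (x^2 / 2)"
proof -
  have nonneg: "exp y + exp (- y) \<le> 2 * exp (y^2 / 2)" if "0 \<le> y" for y :: real
  proof -
    have "ln (1 + (1/2) * (exp (2*y) - 1)) \<le> (2*y)^2 / 8 + (2*y) * (1/2)"
      using Hoeffdings_lemma_aux[of "2*y" "1/2"] that by simp
    then have "ln ((exp y + exp (- y)) / 2 * exp y) \<le> ln (exp (y^2 / 2 + y))"
      by (simp add: field_simps power2_eq_square flip: exp_add)
    then have "(exp y + exp (- y)) / 2 * exp y \<le> exp (y^2 / 2) * exp y"
      by (simp add: add_pos_pos exp_add)
    then show ?thesis by simp
  qed
  show ?thesis
    using nonneg[of x] nonneg[of "- x"] by (cases "0 \<le> x") (simp_all add: add.commute)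
qed

lemma sum_sign_seqs_exp_le:
  "(\<Sum>\<sigma>\<in>sign_seqs K. exp (l * (\<Sum>j<K. \<sigma> j * a j))) \<le> 2^K * exp (l^2 * (\<Sum>j<K. (a j)^2) / 2)"
proof -
  have "(\<Sum>\<sigma>\<in>sign_seqs K. exp (l * (\<Sum>j<K. \<sigma> j * a j)))
      = (\<Sum>\<sigma>\<in>sign_seqs K. \<Prod>j<K. exp (l * (\<sigma> j * a j)))"
    by (simp add: sum_distrib_left exp_sum)
  also have "\<dots> = (\<Prod>j<K. \<Sum>s\<in>{-1, 1}. exp (l * (s * a j)))"
    unfolding sign_seqs_def by (rule prod_sum_PiE[symmetric]) auto
  also have "\<dots> = (\<Prod>j<K. exp (l * a j) + exp (- (l * a j)))"
    by (simp add: add.commute)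
  also have "\<dots> \<le> (\<Prod>j<K. 2 * exp ((l * a j)^2 / 2))"
    by (intro prod_mono conjI exp_add_exp_minus_le) (auto intro: add_nonneg_nonneg)
  also have "\<dots> = 2^K * exp (l^2 * (\<Sum>j<K. (a j)^2) / 2)"
    by (simp add: prod.distrib exp_sum sum_distrib_left sum_divide_distrib power_mult_distrib)
  finally show ?thesis .
qed

lemma card_sign_seqs_tail_le:
  assumes "0 < t" "(\<Sum>j<K. (a j)^2) \<le> W" "0 < W"
  shows "real (card {\<sigma>\<in>sign_seqs K. t \<le> (\<Sum>j<K. \<sigma> j * a j)}) \<le> 2^K * exp (- (t^2) / (2 * W))"
proof -
  define l where "l = t / W"
  have l: "0 \<le> l" using assms unfolding l_def by simp
  let ?S = "{\<sigma>\<in>sign_seqs K. t \<le> (\<Sum>j<K. \<sigma> j * a j)}"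
  have "real (card ?S) * exp (l * t) = (\<Sum>\<sigma>\<in>?S. exp (l * t))"
    by simp
  also have "\<dots> \<le> (\<Sum>\<sigma>\<in>?S. exp (l * (\<Sum>j<K. \<sigma> j * a j)))"
    using l by (intro sum_mono) (auto intro: mult_left_mono)
  also have "\<dots> \<le> (\<Sum>\<sigma>\<in>sign_seqs K. exp (l * (\<Sum>j<K. \<sigma> j * a j)))"
    by (intro sum_mono2 finite_sign_seqs) auto
  also have "\<dots> \<le> 2^K * exp (l^2 * (\<Sum>j<K. (a j)^2) / 2)"
    by (rule sum_sign_seqs_exp_le)
  also have "\<dots> \<le> 2^K * exp (l^2 * W / 2)"
    using assms(2) by (simp add: mult_left_mono)
  finally have "real (card ?S) \<le> 2^K * exp (l^2 * W / 2) / exp (l * t)"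
    by (simp add: field_simps)
  also have "\<dots> = 2^K * exp (l^2 * W / 2 - l * t)"
    by (simp add: exp_diff)
  also have "l^2 * W / 2 - l * t = - (t^2) / (2 * W)"
    using assms unfolding l_def by (simp add: field_simps power2_eq_square)
  finally show ?thesis .
qed

lemma card_sign_seqs_abs_tail_le:
  assumes "0 < t" "(\<Sum>j<K. (a j)^2) \<le> W" "0 < W"
  shows "real (card {\<sigma>\<in>sign_seqs K. t \<le> \<bar>\<Sum>j<K. \<sigma> j * a j\<bar>})
       \<le> 2 * 2^K * exp (- (t^2) / (2 * W))"
proof -
  let ?S = "\<lambda>a. {\<sigma>\<in>sign_seqs K. t \<le> (\<Sum>j<K. \<sigma> j * a j)}"
  have "{\<sigma>\<in>sign_seqs K. t \<le> \<bar>\<Sum>j<K. \<sigma> j * a j\<bar>} \<subseteq> ?S a \<union> ?S (\<lambda>j. - a j)"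
    by (auto simp: sum_negf abs_if)
  then have "card {\<sigma>\<in>sign_seqs K. t \<le> \<bar>\<Sum>j<K. \<sigma> j * a j\<bar>} \<le> card (?S a \<union> ?S (\<lambda>j. - a j))"
    by (intro card_mono) (auto intro: finite_subset[OF _ finite_sign_seqs])
  also have "\<dots> \<le> card (?S a) + card (?S (\<lambda>j. - a j))"
    by (rule card_Un_le)
  finally show ?thesis
    using card_sign_seqs_tail_le[OF assms] card_sign_seqs_tail_le[of t "\<lambda>j. - a j" K W] assms
    by simp
qed

lemma analysis_supnorm_ge: "k < K \<Longrightarrow> \<bar>\<Psi> k \<bullet> y\<bar> \<le> analysis_supnorm K \<Psi> y"
  unfolding analysis_supnorm_def by (intro Max_ge) auto

lemma analysis_supnorm_le:
  "0 < K \<Longrightarrow> (\<And>k. k < K \<Longrightarrow> \<bar>\<Psi> k \<bullet> y\<bar> \<le> B) \<Longrightarrow> analysis_supnorm K \<Psi> y \<le> B"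
  unfolding analysis_supnorm_def by (subst Max_le_iff) auto

lemma analysis_supnorm_eq:
  "i < K \<Longrightarrow> (\<And>k. k < K \<Longrightarrow> \<bar>\<Psi> k \<bullet> y\<bar> \<le> \<bar>\<Psi> i \<bullet> y\<bar>) \<Longrightarrow> analysis_supnorm K \<Psi> y = \<bar>\<Psi> i \<bullet> y\<bar>"
  by (metis antisym analysis_supnorm_ge analysis_supnorm_le gr_zeroI not_less0)

lemma expected_obj_cong:
  assumes "\<And>i. i < K \<Longrightarrow> \<Psi> i = \<Psi>' i"
  shows "expected_obj K c \<Phi> \<Psi> = expected_obj K c \<Phi> \<Psi>'"
proof -
  have "analysis_supnorm K \<Psi> y = analysis_supnorm K \<Psi>' y" for y
    unfolding analysis_supnorm_def using assms by (intro arg_cong[where f = Max] image_cong) auto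
  then show ?thesis
    unfolding expected_obj_def by simp
qed

lemma dict_dist_ge: "i < K \<Longrightarrow> norm (\<Psi> i - \<Phi> i) \<le> dict_dist K \<Psi> \<Phi>"
  unfolding dict_dist_def by (intro Max_ge) auto

lemma dict_dist_attained: "0 < K \<Longrightarrow> \<exists>i<K. norm (\<Psi> i - \<Phi> i) = dict_dist K \<Psi> \<Phi>"
proof -
  assume "0 < K"
  then have "dict_dist K \<Psi> \<Phi> \<in> (\<lambda>i. norm (\<Psi> i - \<Phi> i)) ` {..<K}"
    unfolding dict_dist_def by (intro Max_in) auto
  then show ?thesis by auto
qed

lemma ln_ge_1_minus_inverse: "0 < x \<Longrightarrow> 1 - 1/x \<le> ln (x::real)"
  using ln_le_minus_one[of "1/x"] by (simp add: ln_div)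

lemma one_lt_ln_25_8: "1 < ln (25/8 :: real)"
  using e_less_272 ln_less_cancel_iff[of "exp 1" "25/8"] by simp

lemma ln_power_of_2:
  "ln (4::real) = 2 * ln 2" "ln (8::real) = 3 * ln 2"
  using ln_realpow[of 2 2] ln_realpow[of 2 3] by simp_all

lemma eight_le_if_two_ln_le_half:
  fixes v :: real
  assumes "1 \<le> v" "2 * ln v + ln (25/8) \<le> v / 2"
  shows "8 \<le> v"
proof (rule ccontr)
  assume "\<not> 8 \<le> v"
  show False
  proof (cases "v < 4")
    case True
    have "(v - 1) * (v - 4) \<le> 0"
      using assms True by (intro mult_nonneg_nonpos) auto
    then have "v * v + 4 \<le> 5 * v"
      by (simp add: algebra_simps)
    then have "v / 2 + 2 / v \<le> 5 / 2"
      using assms by (simp add: field_simps)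
    moreover have "1 - 1 / v \<le> ln v"
      using assms by (intro ln_ge_1_minus_inverse) auto
    ultimately show False
      using assms one_lt_ln_25_8 by linarith
  next
    case False
    have "(v - 2) * (v - 8) \<le> 0"
      using \<open>\<not> 8 \<le> v\<close> False by (intro mult_nonneg_nonpos) auto
    then have "v * v + 16 \<le> 10 * v"
      by (simp add: algebra_simps)
    then have "v / 2 + 8 / v \<le> 5"
      using assms by (simp add: field_simps)
    moreover have "1 - 4 / v \<le> ln v - 2 * ln 2"
      using ln_ge_1_minus_inverse[of "v/4"] False ln_power_of_2 by (simp add: ln_div)
    ultimately show False
      using assms one_lt_ln_25_8 ln2_ge_two_thirds by linarith
  qed
qed

lemma log_budget:
  fixes s v L :: real
  assumes "5 < s" "1 \<le> v" "v \<le> s" "L \<le> v / 2" "2 * ln v + 2 * ln s - ln 8 \<le> L"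
  shows "L + 2 * ln s + 1 < v * s / 8"
proof -
  have "ln (25/8::real) = 2 * ln 5 - ln 8"
    using ln_realpow[of 5 2] by (simp add: ln_div)
  moreover have "ln 5 < ln s"
    using assms(1) by simp
  ultimately have v8: "8 \<le> v"
    using assms(2,4,5) by (intro eight_le_if_two_ln_le_half) auto
  have "2 \<le> ln (8::real)"
    using ln_power_of_2 ln2_ge_two_thirds by simp
  moreover have "ln 8 \<le> ln v"
    using v8 by simp
  moreover have "v * 8 \<le> v * s"
    using v8 assms(3) by (intro mult_left_mono) auto
  ultimately show ?thesis
    using assms(4,5) by linarith
qed

section \<open>The signal model\<close>

locale untf_signal_model =
  fixes K :: nat and \<Phi> :: "nat \<Rightarrow> real^'d" and c :: "nat \<Rightarrow> real" and A :: real
  assumes K2: "2 \<le> K"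
    and untf: "is_untf K \<Phi> A"
    and c_dec: "\<forall>i. i + 1 < K \<longrightarrow> c (i + 1) \<le> c i"
    and c_last_nonneg: "c (K - 1) \<ge> 0"
    and c_sq: "(\<Sum>i<K. (c i)^2) = 1"
    and gap: "c 0 > c 1 + 2 * coherence K \<Phi> * (\<Sum>i<K. \<bar>c i\<bar>)"
begin

abbreviation "\<mu> \<equiv> coherence K \<Phi>"
abbreviation "perms \<equiv> {p. p permutes {..<K}}"
abbreviation "signal p \<sigma> \<equiv> synth K \<Phi> (permsign c p \<sigma>)"

text \<open>\<open>margin\<close> and \<open>loss_weight\<close> are the constants \<open>G\<close> and \<open>Q\<close> of the proof sketch.\<close>

definition "l1 = (\<Sum>i<K. \<bar>c i\<bar>)"
definition "margin = c 0 - c 1 - 2 * \<mu> * l1"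
definition "loss_weight = (c 0)^2 - (1 - (c 0)^2) / (real K - 1)"

lemma tight_frame: "is_tight_frame K \<Phi> A"
  using untf unfolding is_untf_def by simp

lemma A_ge_1: "1 \<le> A"
  using untf_bound_ge_1[OF untf] K2 by simp

lemma atom_norm: "i < K \<Longrightarrow> norm (\<Phi> i) = 1"
  using untf unfolding is_untf_def dicts_def by simp

lemma atom_inner_self: "i < K \<Longrightarrow> \<Phi> i \<bullet> \<Phi> i = 1"
  using atom_norm by (metis norm_eq_sqrt_inner real_sqrt_eq_1_iff)

lemma mu_nonneg: "0 \<le> \<mu>"
  using coherence_nonneg[OF K2] .

lemma c_antimono: "i \<le> j \<Longrightarrow> j < K \<Longrightarrow> c j \<le> c i"
proof (induction j rule: dec_induct)
  case (step j)
  then show ?case using c_dec by (metis Suc_eq_plus1 Suc_lessD order_trans)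
qed simp

lemma c_nonneg:
  assumes "i < K"
  shows "0 \<le> c i"
proof -
  have "i \<le> K - 1" using assms by simp
  then show ?thesis using c_antimono[of i "K - 1"] c_last_nonneg assms by simp
qed

lemma l1_eq: "l1 = (\<Sum>i<K. c i)"
  unfolding l1_def using c_nonneg by (intro sum.cong) auto

lemma l1_nonneg: "0 \<le> l1"
  unfolding l1_def by (simp add: sum_nonneg)

lemma margin_pos: "0 < margin"
  using gap unfolding margin_def l1_def by simp

lemma c1_nonneg: "0 \<le> c 1"
  using c_nonneg K2 by simp

lemma margin_le: "margin \<le> c 0 + c 1"
  using mult_nonneg_nonneg[OF mu_nonneg l1_nonneg] c1_nonneg unfolding margin_def by linarith

lemma c1_lt_c0: "c 1 < c 0"
  using margin_pos mult_nonneg_nonneg[OF mu_nonneg l1_nonneg] unfolding margin_def by linarith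

lemma c0_pos: "0 < c 0"
  using c1_lt_c0 c1_nonneg by linarith

lemma c_le_c1: "0 < i \<Longrightarrow> i < K \<Longrightarrow> c i \<le> c 1"
  using c_antimono by simp

lemma one_le_K_c0_sq: "1 \<le> real K * (c 0)^2"
proof -
  have "(\<Sum>i<K. (c i)^2) \<le> (\<Sum>i<K. (c 0)^2)"
    using c_antimono c_nonneg by (intro sum_mono power_mono) auto
  then show ?thesis using c_sq by simp
qed

lemma c0_le_1: "c 0 \<le> 1"
proof -
  have "(c 0)^2 \<le> (\<Sum>i<K. (c i)^2)"
    using K2 by (intro member_le_sum) auto
  then show ?thesis
    using c_sq c0_pos by (simp add: power_le_one_iff)
qed

lemma sum_tail_c_sq: "(\<Sum>i\<in>{1..<K}. (c i)^2) = 1 - (c 0)^2"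
proof -
  have "{..<K} = insert 0 {1..<K}" using K2 by auto
  then show ?thesis using c_sq by simp
qed

lemma loss_weight_pos: "0 < loss_weight"
proof -
  have "(\<Sum>i\<in>{1..<K}. (c i)^2) \<le> (\<Sum>i\<in>{1..<K}. (c 1)^2)"
    using c_le_c1 c_nonneg by (intro sum_mono power_mono) auto
  then have "1 - (c 0)^2 \<le> (real K - 1) * (c 1)^2"
    using sum_tail_c_sq K2 by (simp add: of_nat_diff)
  also have "\<dots> < (real K - 1) * (c 0)^2"
    using c1_lt_c0 c1_nonneg K2 by (intro mult_strict_left_mono power_strict_mono) auto
  finally show ?thesis
    using K2 unfolding loss_weight_def by (simp add: divide_less_eq mult.commute)
qed

lemma loss_weight_le: "loss_weight \<le> (c 0)^2"
  using c0_le_1 c0_pos K2 unfolding loss_weight_def by (simp add: power_le_one)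

lemma permutes_inv_0:
  assumes "p permutes {..<K}"
  shows "inv p 0 < K" "p (inv p 0) = 0"
  using permutes_inverses(1)[OF assms] permutes_lessThan_lt[OF permutes_inv[OF assms], of 0] K2
  by auto

lemma permsign_abs:
  assumes "p permutes {..<K}" "\<sigma> \<in> sign_seqs K" "j < K"
  shows "\<bar>permsign c p \<sigma> j\<bar> = c (p j)"
  using sign_seqs_abs[OF assms(2,3)] c_nonneg[OF permutes_lessThan_lt[OF assms(1,3)]]
  by (simp add: permsign_def abs_mult)

lemma sum_permsign_sq:
  assumes "p permutes {..<K}" "\<sigma> \<in> sign_seqs K"
  shows "(\<Sum>j<K. (permsign c p \<sigma> j)^2) = 1"
proof -
  have "(\<Sum>j<K. (permsign c p \<sigma> j)^2) = (\<Sum>j<K. (c (p j))^2)"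
    using permsign_abs[OF assms] by (intro sum.cong refl) (metis lessThan_iff power2_abs)
  then show ?thesis
    using sum_permutes_lessThan[OF assms(1), of "\<lambda>i. (c i)^2"] c_sq by simp
qed

lemma sum_permsign_abs:
  assumes "p permutes {..<K}" "\<sigma> \<in> sign_seqs K"
  shows "(\<Sum>j<K. \<bar>permsign c p \<sigma> j\<bar>) = l1"
  using permsign_abs[OF assms] sum_permutes_lessThan[OF assms(1), of c] l1_eq by simp

lemma norm_signal_sq_le:
  assumes "p permutes {..<K}" "\<sigma> \<in> sign_seqs K"
  shows "(norm (signal p \<sigma>))^2 \<le> A"
  using tight_frame_synth_norm_le[OF tight_frame, of "permsign c p \<sigma>"] sum_permsign_sq[OF assms]
  by simp

lemma inner_signal_deviation:
  assumes "p permutes {..<K}" "\<sigma> \<in> sign_seqs K" "k < K"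
  shows "\<bar>\<Phi> k \<bullet> signal p \<sigma> - permsign c p \<sigma> k\<bar> \<le> \<mu> * l1"
proof -
  define x where "x = permsign c p \<sigma>"
  have "\<Phi> k \<bullet> synth K \<Phi> x - x k = (\<Sum>j\<in>{..<K}-{k}. x j * (\<Phi> k \<bullet> \<Phi> j))"
    using assms(3) atom_inner_self[OF assms(3)] by (simp add: inner_synth sum.remove)
  also have "\<bar>\<dots>\<bar> \<le> (\<Sum>j\<in>{..<K}-{k}. \<bar>x j\<bar> * \<mu>)"
    using assms(3) coherence_ge
    by (intro order_trans[OF sum_abs] sum_mono) (auto simp: abs_mult intro!: mult_left_mono)
  also have "\<dots> \<le> (\<Sum>j<K. \<bar>x j\<bar> * \<mu>)"
    using mu_nonneg by (intro sum_mono2) auto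
  also have "\<dots> = \<mu> * l1"
    using sum_permsign_abs[OF assms(1,2)] unfolding x_def by (simp add: sum_distrib_left[symmetric] mult.commute)
  finally show ?thesis
    unfolding x_def .
qed

lemma peak_entry_ge:
  assumes "p permutes {..<K}" "\<sigma> \<in> sign_seqs K"
  shows "c 0 - \<mu> * l1 \<le> \<bar>\<Phi> (inv p 0) \<bullet> signal p \<sigma>\<bar>"
proof -
  have "\<bar>permsign c p \<sigma> (inv p 0)\<bar> = c 0"
    using permsign_abs[OF assms permutes_inv_0(1)[OF assms(1)]] permutes_inv_0(2)[OF assms(1)] by simp
  then show ?thesis
    using inner_signal_deviation[OF assms permutes_inv_0(1)[OF assms(1)]] by linarith
qed

lemma other_entry_le:
  assumes "p permutes {..<K}" "\<sigma> \<in> sign_seqs K" "k < K" "k \<noteq> inv p 0"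
  shows "\<bar>\<Phi> k \<bullet> signal p \<sigma>\<bar> \<le> c 1 + \<mu> * l1"
proof -
  have "p k \<noteq> 0"
    using assms(1,4) permutes_inv_eq by metis
  then have "\<bar>permsign c p \<sigma> k\<bar> \<le> c 1"
    using permsign_abs[OF assms(1-3)] c_le_c1 permutes_lessThan_lt[OF assms(1,3)] by simp
  then show ?thesis
    using inner_signal_deviation[OF assms(1-3)] by linarith
qed

lemma analysis_supnorm_signal:
  assumes "p permutes {..<K}" "\<sigma> \<in> sign_seqs K"
  shows "analysis_supnorm K \<Phi> (signal p \<sigma>) = \<bar>\<Phi> (inv p 0) \<bullet> signal p \<sigma>\<bar>"
proof (rule analysis_supnorm_eq)
  show "inv p 0 < K"
    using permutes_inv_0(1)[OF assms(1)] .
  fix k assume "k < K"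
  then show "\<bar>\<Phi> k \<bullet> signal p \<sigma>\<bar> \<le> \<bar>\<Phi> (inv p 0) \<bullet> signal p \<sigma>\<bar>"
    using peak_entry_ge[OF assms] other_entry_le[OF assms] margin_pos unfolding margin_def
    by (cases "k = inv p 0") fastforce+
qed

text \<open>Either every atom moves \<open>\<langle>\<cdot>, y\<rangle>\<close> by less than half the margin, so that the maximum
  stays at the peak atom, or the whole objective is crudely bounded by \<open>\<parallel>y\<parallel>\<^sup>2 \<le> A\<close>.\<close>

lemma analysis_supnorm_perturbed_sq_le:
  assumes "p permutes {..<K}" "\<sigma> \<in> sign_seqs K" and \<Psi>: "\<Psi> \<in> dicts K"
  shows "(analysis_supnorm K \<Psi> (signal p \<sigma>))^2 \<le> (\<Psi> (inv p 0) \<bullet> signal p \<sigma>)^2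
           + A * of_bool (\<exists>k<K. margin / 2 \<le> \<bar>(\<Psi> k - \<Phi> k) \<bullet> signal p \<sigma>\<bar>)"
proof (cases "\<exists>k<K. margin / 2 \<le> \<bar>(\<Psi> k - \<Phi> k) \<bullet> signal p \<sigma>\<bar>")
  case False
  then have close: "\<bar>\<Psi> k \<bullet> signal p \<sigma> - \<Phi> k \<bullet> signal p \<sigma>\<bar> < margin / 2" if "k < K" for k
    using that by (auto simp: inner_diff_left)
  have "analysis_supnorm K \<Psi> (signal p \<sigma>) = \<bar>\<Psi> (inv p 0) \<bullet> signal p \<sigma>\<bar>"
  proof (rule analysis_supnorm_eq)
    show i: "inv p 0 < K"
      using permutes_inv_0(1)[OF assms(1)] .
    fix k assume k: "k < K"
    show "\<bar>\<Psi> k \<bullet> signal p \<sigma>\<bar> \<le> \<bar>\<Psi> (inv p 0) \<bullet> signal p \<sigma>\<bar>"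
    proof (cases "k = inv p 0")
      case False
      then show ?thesis
        using peak_entry_ge[OF assms(1,2)] other_entry_le[OF assms(1,2) k False] close[OF k] close[OF i]
          margin_def by linarith
    qed simp
  qed
  then show ?thesis
    using False A_ge_1 by simp
next
  case True
  have "analysis_supnorm K \<Psi> (signal p \<sigma>) \<le> norm (signal p \<sigma>)"
  proof (rule analysis_supnorm_le)
    show "0 < K" using K2 by simp
    fix k assume "k < K"
    then have "norm (\<Psi> k) = 1" using \<Psi> unfolding dicts_def by simp
    then show "\<bar>\<Psi> k \<bullet> signal p \<sigma>\<bar> \<le> norm (signal p \<sigma>)"
      using Cauchy_Schwarz_ineq2[of "\<Psi> k" "signal p \<sigma>"] by simp
  qed
  moreover have "0 \<le> analysis_supnorm K \<Psi> (signal p \<sigma>)"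
    using order_trans[OF abs_ge_zero analysis_supnorm_ge[of 0 K \<Psi>]] K2 by simp
  ultimately have "(analysis_supnorm K \<Psi> (signal p \<sigma>))^2 \<le> (norm (signal p \<sigma>))^2"
    by (rule power_mono)
  also have "\<dots> \<le> A"
    using norm_signal_sq_le[OF assms(1,2)] .
  finally show ?thesis
    using True by (simp add: add_increasing)
qed

lemma inner_signal: "w \<bullet> signal p \<sigma> = (\<Sum>j<K. \<sigma> j * (c (p j) * (w \<bullet> \<Phi> j)))"
  unfolding inner_synth permsign_def by (simp add: mult.assoc)

lemma sum_signs_inner_signal_sq:
  "(\<Sum>\<sigma>\<in>sign_seqs K. (w \<bullet> signal p \<sigma>)^2) = 2^K * (\<Sum>j<K. (c (p j))^2 * (w \<bullet> \<Phi> j)^2)"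
  unfolding inner_signal sum_sign_seqs_square by (simp add: power_mult_distrib)

text \<open>The bound vanishes when no sign pattern can reach the threshold, because
  \<open>|\<langle>u, y\<rangle>| \<le> \<parallel>u\<parallel> \<surd>A\<close>; otherwise it is Hoeffding's bound with variance proxy \<open>c\<^sub>1\<^sup>2 A \<parallel>u\<parallel>\<^sup>2\<close>.\<close>

definition "deviation_bound \<eta> =
  (if 2 * \<eta> * sqrt A < margin then 0 else 2 * exp (- (margin^2) / (8 * (c 0)^2 * A * \<eta>^2)))"

lemma card_deviation_le:
  assumes p: "p permutes {..<K}"
  shows "real (card {\<sigma>\<in>sign_seqs K. margin / 2 \<le> \<bar>u \<bullet> signal p \<sigma>\<bar>}) \<le> 2^K * deviation_bound (norm u)"
proof (cases "2 * norm u * sqrt A < margin")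
  case True
  have "\<bar>u \<bullet> signal p \<sigma>\<bar> < margin / 2" if "\<sigma> \<in> sign_seqs K" for \<sigma>
  proof -
    have "norm (signal p \<sigma>) \<le> sqrt A"
      using norm_signal_sq_le[OF p that] by (simp add: real_le_rsqrt)
    then have "\<bar>u \<bullet> signal p \<sigma>\<bar> \<le> norm u * sqrt A"
      by (rule order_trans[OF Cauchy_Schwarz_ineq2 mult_left_mono]) simp
    then show ?thesis using True by simp
  qed
  then have empty: "{\<sigma>\<in>sign_seqs K. margin / 2 \<le> \<bar>u \<bullet> signal p \<sigma>\<bar>} = {}"
    by force
  show ?thesis
    unfolding empty using True by (simp add: deviation_bound_def)
next
  case False
  then have "0 < norm u"
    using margin_pos by (cases "u = 0") auto
  then have W: "0 < (c 0)^2 * A * (norm u)^2"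
    using c0_pos A_ge_1 by simp
  have "(c (p j))^2 \<le> (c 0)^2" if "j < K" for j
    using c_antimono[of 0 "p j"] c_nonneg permutes_lessThan_lt[OF p that] by (simp add: power_mono)
  then have "(\<Sum>j<K. (c (p j) * (u \<bullet> \<Phi> j))^2) \<le> (\<Sum>j<K. (c 0)^2 * (u \<bullet> \<Phi> j)^2)"
    unfolding power_mult_distrib by (intro sum_mono mult_right_mono) auto
  also have "\<dots> = (c 0)^2 * A * (norm u)^2"
    using tight_frame unfolding is_tight_frame_def by (simp add: sum_distrib_left[symmetric] inner_commute)
  finally have "real (card {\<sigma>\<in>sign_seqs K. margin / 2 \<le> \<bar>u \<bullet> signal p \<sigma>\<bar>})
      \<le> 2 * 2^K * exp (- ((margin / 2)^2) / (2 * ((c 0)^2 * A * (norm u)^2)))"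
    unfolding inner_signal using margin_pos W by (intro card_sign_seqs_abs_tail_le) auto
  then show ?thesis
    using False by (simp add: deviation_bound_def power_divide field_simps)
qed

definition "total_obj \<Psi> = (\<Sum>p\<in>perms. \<Sum>\<sigma>\<in>sign_seqs K. (analysis_supnorm K \<Psi> (signal p \<sigma>))^2)"

text \<open>The objective as it would be if the maximum were always attained at the peak atom.\<close>

definition "peak_energy \<Psi> = (\<Sum>p\<in>perms. \<Sum>\<sigma>\<in>sign_seqs K. (\<Psi> (inv p 0) \<bullet> signal p \<sigma>)^2)"

lemma expected_obj_eq: "expected_obj K c \<Phi> \<Psi> = total_obj \<Psi> / (2^K * fact K)"
  unfolding expected_obj_def total_obj_def ..

lemma total_obj_Phi: "total_obj \<Phi> = peak_energy \<Phi>"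
  unfolding total_obj_def peak_energy_def using analysis_supnorm_signal by simp

lemma total_obj_perturbed_le:
  assumes \<Psi>: "\<Psi> \<in> dicts K"
  shows "total_obj \<Psi> \<le> peak_energy \<Psi> + A * fact K * 2^K * (\<Sum>k<K. deviation_bound (norm (\<Psi> k - \<Phi> k)))"
proof -
  define bad where "bad p k = {\<sigma>\<in>sign_seqs K. margin / 2 \<le> \<bar>(\<Psi> k - \<Phi> k) \<bullet> signal p \<sigma>\<bar>}" for p k
  define B where "B = (\<Sum>k<K. 2^K * deviation_bound (norm (\<Psi> k - \<Phi> k)))"
  have per_perm: "(\<Sum>\<sigma>\<in>sign_seqs K. (analysis_supnorm K \<Psi> (signal p \<sigma>))^2)
      \<le> (\<Sum>\<sigma>\<in>sign_seqs K. (\<Psi> (inv p 0) \<bullet> signal p \<sigma>)^2) + A * B"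
    if p: "p permutes {..<K}" for p
  proof -
    have "sign_seqs K \<inter> {\<sigma>. \<exists>k<K. \<sigma> \<in> bad p k} = (\<Union>k<K. bad p k)"
      by (auto simp: bad_def)
    then have "(\<Sum>\<sigma>\<in>sign_seqs K. A * of_bool (\<exists>k<K. \<sigma> \<in> bad p k)) = A * card (\<Union>k<K. bad p k)"
      by (simp add: finite_sign_seqs flip: sum_distrib_left)
    also have "real (card (\<Union>k<K. bad p k)) \<le> (\<Sum>k<K. real (card (bad p k)))"
      using card_UN_le[of "{..<K}" "bad p"] by (simp flip: of_nat_sum)
    also have "\<dots> \<le> B"
      unfolding B_def bad_def by (intro sum_mono card_deviation_le[OF p])
    finally have "(\<Sum>\<sigma>\<in>sign_seqs K. A * of_bool (\<exists>k<K. \<sigma> \<in> bad p k)) \<le> A * B"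
      using A_ge_1 by simp
    moreover have "(\<Sum>\<sigma>\<in>sign_seqs K. (analysis_supnorm K \<Psi> (signal p \<sigma>))^2)
        \<le> (\<Sum>\<sigma>\<in>sign_seqs K. (\<Psi> (inv p 0) \<bullet> signal p \<sigma>)^2 + A * of_bool (\<exists>k<K. \<sigma> \<in> bad p k))"
      using analysis_supnorm_perturbed_sq_le[OF p _ \<Psi>] unfolding bad_def by (intro sum_mono) auto
    ultimately show ?thesis
      by (simp add: sum.distrib)
  qed
  have "total_obj \<Psi> \<le> (\<Sum>p\<in>perms. (\<Sum>\<sigma>\<in>sign_seqs K. (\<Psi> (inv p 0) \<bullet> signal p \<sigma>)^2) + A * B)"
    unfolding total_obj_def using per_perm by (intro sum_mono) auto
  also have "\<dots> = peak_energy \<Psi> + A * fact K * 2^K * (\<Sum>k<K. deviation_bound (norm (\<Psi> k - \<Phi> k)))"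
    unfolding peak_energy_def B_def by (simp add: sum.distrib card_permutations sum_distrib_left mult_ac)
  finally show ?thesis .
qed

lemma peak_energy_loss:
  assumes \<Psi>: "\<Psi> \<in> dicts K"
  shows "peak_energy \<Phi> - peak_energy \<Psi>
       = 2^K * fact (K - 1) * loss_weight * (\<Sum>i<K. 1 - (\<Psi> i \<bullet> \<Phi> i)^2)"
proof -
  define D where "D = (\<lambda>i j. (\<Phi> i \<bullet> \<Phi> j)^2 - (\<Psi> i \<bullet> \<Phi> j)^2)"
  have rows: "(\<Sum>j<K. D i j) = 0" if i: "i < K" for i
  proof -
    have "(\<Sum>j<K. (\<Phi> j \<bullet> \<Phi> i)^2) = A" "(\<Sum>j<K. (\<Phi> j \<bullet> \<Psi> i)^2) = A"
      using tight_frame atom_norm[OF i] \<Psi> i unfolding is_tight_frame_def dicts_def by auto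
    then show ?thesis
      unfolding D_def by (simp add: sum_subtractf inner_commute)
  qed
  have "peak_energy \<Phi> - peak_energy \<Psi> = 2^K * (\<Sum>p\<in>perms. \<Sum>j<K. (c (p j))^2 * D (inv p 0) j)"
    unfolding peak_energy_def sum_signs_inner_signal_sq D_def
    by (simp add: sum_subtractf right_diff_distrib sum_distrib_left)
  also have "\<dots> = 2^K * (\<Sum>p\<in>perms. \<Sum>m<K. (c m)^2 * D (p 0) (p m))"
    using sum_permutations_inv_reindex[where f = "\<lambda>i. (c i)^2" and a = 0] by simp
  also have "\<dots> = 2^K * (fact (K - 1) * loss_weight * (\<Sum>i<K. D i i))"
    using sum_permutations_weighted[where w = "\<lambda>m. (c m)^2" and D = D, OF K2 rows] sum_tail_c_sq
    by (simp add: loss_weight_def)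
  also have "(\<Sum>i<K. D i i) = (\<Sum>i<K. 1 - (\<Psi> i \<bullet> \<Phi> i)^2)"
    unfolding D_def using atom_inner_self by simp
  finally show ?thesis by simp
qed

definition "margin_ratio = margin / (c 0 + c 1)"

lemma margin_ratio: "0 < margin_ratio" "margin_ratio \<le> 1" "margin_ratio * c 0 \<le> margin"
  unfolding margin_ratio_def using margin_pos margin_le c0_pos c1_nonneg by (auto simp: field_simps)

definition "radius = margin_ratio^2 / (2 * A * ln (2 * A * K / loss_weight))"

lemma one_lt_ln_ratio: "1 < ln (2 * A * K / loss_weight)"
proof -
  have "4 \<le> 2 * A * K"
    using mult_mono[of 1 A 2 "real K"] A_ge_1 K2 by simp
  also have "\<dots> \<le> 2 * A * K / loss_weight"
  proof -
    have "loss_weight \<le> 1"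
      using loss_weight_le c0_le_1 c0_pos power_le_one[of "c 0" 2] by linarith
    then show ?thesis
      using loss_weight_pos A_ge_1 by (simp add: le_divide_eq mult_left_le)
  qed
  finally have "exp 1 < 2 * A * K / loss_weight"
    using e_less_272 by simp
  moreover have "0 < 2 * A * K / loss_weight"
    using loss_weight_pos A_ge_1 K2 by simp
  ultimately show ?thesis
    using ln_less_cancel_iff[of "exp 1" "2 * A * K / loss_weight"] by simp
qed

lemma radius_pos: "0 < radius"
  unfolding radius_def using margin_ratio A_ge_1 one_lt_ln_ratio
  by (intro divide_pos_pos mult_pos_pos) auto

lemma deviation_regime_ratio_le:
  assumes "0 < \<eta>" "margin \<le> 2 * \<eta> * sqrt A"
  shows "(margin_ratio^2 / (A * \<eta>^2))^2 / 8 \<le> 2 * A * K / loss_weight"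
proof -
  define r where "r = margin_ratio^2 / (A * \<eta>^2)"
  have "margin_ratio * c 0 \<le> 2 * \<eta> * sqrt A"
    using margin_ratio(3) assms(2) by linarith
  then have "(margin_ratio * c 0)^2 \<le> (2 * \<eta> * sqrt A)^2"
    using margin_ratio c0_pos by (intro power_mono) auto
  then have "r * (c 0)^2 \<le> 4"
    unfolding r_def using assms(1) A_ge_1 by (simp add: power_mult_distrib field_simps)
  then have "(r * (c 0)^2)^2 \<le> 4^2"
    unfolding r_def using A_ge_1 by (intro power_mono) auto
  then have "r^2 / 8 \<le> 2 * (1 / (c 0)^2)^2"
    using c0_pos by (simp add: power_mult_distrib field_simps)
  also have "\<dots> \<le> 2 * A * K * (1 / (c 0)^2)"
  proof -
    have "1 / (c 0)^2 \<le> K"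
      using one_le_K_c0_sq c0_pos by (simp add: divide_le_eq)
    also have "\<dots> \<le> A * K"
      using mult_right_mono[OF A_ge_1, of "real K"] by simp
    finally have "1 / (c 0)^2 * (1 / (c 0)^2) \<le> (A * K) * (1 / (c 0)^2)"
      by (intro mult_right_mono) auto
    then show ?thesis
      by (simp add: power2_eq_square[of "1 / (c 0)^2"])
  qed
  also have "\<dots> \<le> 2 * A * K * (1 / loss_weight)"
    using loss_weight_le loss_weight_pos A_ge_1 by (intro mult_left_mono frac_le) auto
  finally show ?thesis
    unfolding r_def by simp
qed

text \<open>Where deviations of size \<open>G/2\<close> are possible at all, the Hoeffding exponent beats the
  logarithm of the loss: with \<open>s = 1/\<eta>\<close> and \<open>v = g\<^sup>2 s / A\<close>, where \<open>g = G/(c\<^sub>1 + c\<^sub>2)\<close>, the radius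
  bound gives \<open>L \<le> v/2\<close> and the previous lemma gives \<open>(v s)\<^sup>2 / 8 \<le> 2 A K / Q = exp L\<close>.\<close>

lemma deviation_exponent_large:
  assumes "0 < \<eta>" "\<eta> \<le> radius" "\<eta> < 1/5" "margin \<le> 2 * \<eta> * sqrt A"
  shows "ln (2 * A * K / loss_weight) + 2 * ln (1 / \<eta>) + 1 < margin^2 / (8 * (c 0)^2 * A * \<eta>^2)"
proof -
  define g where "g = margin_ratio"
  define L where "L = ln (2 * A * K / loss_weight)"
  define s where "s = 1 / \<eta>"
  define v where "v = g^2 * s / A"
  note g = margin_ratio[folded g_def]
  have s: "0 < s" "5 < s"
    unfolding s_def using assms by (auto simp: field_simps)
  have L: "1 < L"
    unfolding L_def by (rule one_lt_ln_ratio)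
  have "\<eta> * (2 * A * L) \<le> g^2"
    using assms(2) L A_ge_1 unfolding radius_def g_def[symmetric] L_def[symmetric]
    by (simp add: le_divide_eq mult.commute)
  then have Lv: "L \<le> v / 2"
    unfolding v_def s_def using assms(1) A_ge_1 by (simp add: field_simps)
  have "v * s = g^2 / (A * \<eta>^2)"
    unfolding v_def s_def by (simp add: power2_eq_square)
  then have "(v * s)^2 / 8 \<le> 2 * A * K / loss_weight"
    using deviation_regime_ratio_le[OF assms(1,4)] unfolding g_def by simp
  then have "ln ((v * s)^2 / 8) \<le> L"
    unfolding L_def using g s A_ge_1 unfolding v_def by (intro ln_mono) auto
  then have "2 * ln v + 2 * ln s - ln 8 \<le> L"
    using g s A_ge_1 unfolding v_def by (simp add: ln_div ln_mult ln_realpow)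
  moreover have "v \<le> s"
  proof -
    have "g^2 \<le> A"
      using g A_ge_1 power_le_one[of g 2] by linarith
    then show ?thesis
      unfolding v_def using s A_ge_1 by (simp add: divide_le_eq mult.commute mult_left_mono)
  qed
  ultimately have "L + 2 * ln s + 1 < v * s / 8"
    using s Lv L by (intro log_budget) auto
  also have "v * s / 8 = (g * c 0)^2 / (8 * (c 0)^2 * A * \<eta>^2)"
    unfolding v_def s_def using c0_pos assms(1) by (simp add: field_simps power2_eq_square)
  also have "\<dots> \<le> margin^2 / (8 * (c 0)^2 * A * \<eta>^2)"
    using g c0_pos A_ge_1 assms(1) by (intro divide_right_mono power_mono) auto
  finally show ?thesis
    unfolding L_def s_def .
qed

lemma deviation_bound_lt_loss:
  assumes "0 < \<eta>" "\<eta> \<le> radius" "\<eta> < 1/5"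
  shows "real K * A * deviation_bound \<eta> < loss_weight * (\<eta>^2 * (1 - \<eta>^2 / 4))"
proof -
  have "\<eta>^2 \<le> (1/5)^2"
    using assms by (intro power_mono) auto
  then have small: "1/2 \<le> 1 - \<eta>^2 / 4"
    by (simp add: power2_eq_square)
  have loss_pos: "0 < loss_weight * (\<eta>^2 * (1 - \<eta>^2 / 4))"
    using loss_weight_pos assms small by simp
  show ?thesis
  proof (cases "2 * \<eta> * sqrt A < margin")
    case True
    then show ?thesis using loss_pos by (simp add: deviation_bound_def)
  next
    case False
    have "-1 \<le> ln (1 - \<eta>^2 / 4)"
      using small ln_2_less_1 ln_le_cancel_iff[of "1/2" "1 - \<eta>^2 / 4"] by (simp add: ln_div)
    moreover have "ln (loss_weight * (\<eta>^2 * (1 - \<eta>^2 / 4)) / (2 * K * A))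
        = ln loss_weight + ln (\<eta>^2) + ln (1 - \<eta>^2 / 4) - ln (2 * K * A)"
      using loss_weight_pos A_ge_1 K2 assms small by (simp add: ln_div ln_mult)
    moreover have "ln (2 * A * K / loss_weight) = ln (2 * K * A) - ln loss_weight"
      using loss_weight_pos A_ge_1 K2 by (simp add: ln_div mult.commute mult.left_commute)
    moreover have "2 * ln (1 / \<eta>) = - ln (\<eta>^2)"
      using assms by (simp add: ln_div ln_realpow)
    ultimately have "- (margin^2 / (8 * (c 0)^2 * A * \<eta>^2))
        < ln (loss_weight * (\<eta>^2 * (1 - \<eta>^2 / 4)) / (2 * K * A))"
      using deviation_exponent_large[OF assms] False by linarith
    moreover have "0 < loss_weight * (\<eta>^2 * (1 - \<eta>^2 / 4)) / (2 * K * A)"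
      using loss_pos A_ge_1 K2 by simp
    ultimately have "exp (- (margin^2 / (8 * (c 0)^2 * A * \<eta>^2)))
        < loss_weight * (\<eta>^2 * (1 - \<eta>^2 / 4)) / (2 * K * A)"
      by (metis exp_less_cancel_iff exp_ln)
    then show ?thesis
      using False A_ge_1 K2 by (simp add: deviation_bound_def less_divide_eq mult.commute
          mult.left_commute)
  qed
qed

lemma expected_obj_strict_decrease:
  assumes \<Psi>: "\<Psi> \<in> dicts K" and "0 < dict_dist K \<Psi> \<Phi>" "dict_dist K \<Psi> \<Phi> \<le> \<epsilon>"
    and "\<epsilon> < 1/5" "\<epsilon> \<le> radius"
  shows "expected_obj K c \<Phi> \<Psi> < expected_obj K c \<Phi> \<Phi>"
proof -
  define \<eta> where "\<eta> k = norm (\<Psi> k - \<Phi> k)" for k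
  have \<eta>: "\<eta> k \<le> radius" "\<eta> k < 1/5" if "k < K" for k
    using dict_dist_ge[OF that, of \<Psi> \<Phi>] assms unfolding \<eta>_def by auto
  have loss: "1 - (\<Psi> k \<bullet> \<Phi> k)^2 = (\<eta> k)^2 * (1 - (\<eta> k)^2 / 4)" if "k < K" for k
    unfolding \<eta>_def using \<Psi> that atom_norm by (intro one_minus_inner_sq_unit) (auto simp: dicts_def)
  have term_le: "real K * A * deviation_bound (\<eta> k) \<le> loss_weight * (1 - (\<Psi> k \<bullet> \<Phi> k)^2)"
    if "k < K" for k
    using deviation_bound_lt_loss[OF _ \<eta>[OF that]] loss[OF that] \<eta>[OF that]
    by (cases "\<eta> k = 0") (simp_all add: deviation_bound_def margin_pos \<eta>_def less_imp_le)
  obtain k0 where k0: "k0 < K" "\<eta> k0 = dict_dist K \<Psi> \<Phi>"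
    using dict_dist_attained[of K \<Psi> \<Phi>] K2 unfolding \<eta>_def by auto
  then have "real K * A * deviation_bound (\<eta> k0) < loss_weight * (1 - (\<Psi> k0 \<bullet> \<Phi> k0)^2)"
    using deviation_bound_lt_loss[OF _ \<eta>[OF k0(1)]] loss[OF k0(1)] assms(2) by simp
  then have "(\<Sum>k<K. real K * A * deviation_bound (\<eta> k)) < (\<Sum>k<K. loss_weight * (1 - (\<Psi> k \<bullet> \<Phi> k)^2))"
    using term_le k0(1) by (intro sum_strict_mono_ex1) auto
  then have "(2^K * fact (K - 1)) * (real K * A * (\<Sum>k<K. deviation_bound (\<eta> k)))
      < (2^K * fact (K - 1)) * (loss_weight * (\<Sum>i<K. 1 - (\<Psi> i \<bullet> \<Phi> i)^2))"
    by (intro mult_strict_left_mono) (simp_all add: sum_distrib_left)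
  moreover have "fact K = real K * fact (K - 1)"
    using K2 by (metis fact_reduce of_nat_fact not_numeral_le_zero gr0I)
  ultimately have "A * fact K * 2^K * (\<Sum>k<K. deviation_bound (\<eta> k))
      < 2^K * fact (K - 1) * loss_weight * (\<Sum>i<K. 1 - (\<Psi> i \<bullet> \<Phi> i)^2)"
    by (simp add: mult_ac)
  then have "total_obj \<Psi> < total_obj \<Phi>"
    using total_obj_perturbed_le[OF \<Psi>] peak_energy_loss[OF \<Psi>] total_obj_Phi
    unfolding \<eta>_def by linarith
  then show ?thesis
    unfolding expected_obj_eq by (intro divide_strict_right_mono) auto
qed

lemma expected_obj_local_max:
  "\<exists>\<delta>>0. \<forall>\<Psi>\<in>dicts K. dict_dist K \<Psi> \<Phi> \<le> \<delta> \<longrightarrow> expected_obj K c \<Phi> \<Psi> \<le> expected_obj K c \<Phi> \<Phi>"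
proof (intro exI[of _ "min (1/10) radius"] conjI ballI impI)
  show "0 < min (1/10) radius"
    using radius_pos by simp
  fix \<Psi> assume \<Psi>: "\<Psi> \<in> dicts K" and d: "dict_dist K \<Psi> \<Phi> \<le> min (1/10) radius"
  show "expected_obj K c \<Phi> \<Psi> \<le> expected_obj K c \<Phi> \<Phi>"
  proof (cases "0 < dict_dist K \<Psi> \<Phi>")
    case True
    have "min (1/10) radius \<le> 1/10" by simp
    with expected_obj_strict_decrease[OF \<Psi> True d] show ?thesis
      by simp
  next
    case False
    have "\<Psi> i = \<Phi> i" if "i < K" for i
    proof -
      have "norm (\<Psi> i - \<Phi> i) \<le> 0"
        using dict_dist_ge[OF that, of \<Psi> \<Phi>] False by linarith
      then show ?thesis by simp
    qed
    then show ?thesis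
      using expected_obj_cong by (metis order_refl)
  qed
qed

end

theorem theorem2:
  fixes K :: nat and \<Phi> :: "nat \<Rightarrow> real^'d" and c :: "nat \<Rightarrow> real"
  defines "A \<equiv> real K / real CARD('d)"
  defines "\<mu> \<equiv> coherence K \<Phi>"
  assumes K2: "2 \<le> K"
    and untf: "is_untf K \<Phi> A"
    and c_dec: "\<forall>i. i + 1 < K \<longrightarrow> c (i + 1) \<le> c i"
    and c_nonneg: "c (K - 1) \<ge> 0"
    and c_norm: "sqrt (\<Sum>i<K. (c i)^2) = 1"
    and gap: "c 0 > c 1 + 2 * \<mu> * (\<Sum>i<K. \<bar>c i\<bar>)"
  shows "(\<exists>\<delta>>0. \<forall>\<Psi>\<in>dicts K. dict_dist K \<Psi> \<Phi> \<le> \<delta> \<longrightarrow>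
            expected_obj K c \<Phi> \<Psi> \<le> expected_obj K c \<Phi> \<Phi>)
       \<and> (\<forall>\<epsilon>. \<epsilon> < 1/5 \<and>
            \<epsilon> \<le> (1 - 2 * (c 1 + \<mu> * (\<Sum>i<K. \<bar>c i\<bar>)) / (c 1 + c 0))^2 /
                 (2 * A * ln (2 * A * K / ((c 0)^2 - (1 - (c 0)^2) / (K - 1))))
          \<longrightarrow> (\<forall>\<Psi>\<in>dicts K. 0 < dict_dist K \<Psi> \<Phi> \<and> dict_dist K \<Psi> \<Phi> \<le> \<epsilon> \<longrightarrow>
                 expected_obj K c \<Phi> \<Psi> < expected_obj K c \<Phi> \<Phi>))"
proof -
  interpret untf_signal_model K \<Phi> c A
    using K2 untf c_dec c_nonneg c_norm gap unfolding \<mu>_def by unfold_locales auto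
  have "1 - 2 * (c 1 + \<mu> * (\<Sum>i<K. \<bar>c i\<bar>)) / (c 1 + c 0) = margin_ratio"
    using c0_pos c1_nonneg unfolding margin_ratio_def margin_def l1_def \<mu>_def by (simp add: field_simps)
  moreover have "(c 0)^2 - (1 - (c 0)^2) / (K - 1) = loss_weight"
    unfolding loss_weight_def using K2 by (simp add: of_nat_diff)
  ultimately have radius_eq: "(1 - 2 * (c 1 + \<mu> * (\<Sum>i<K. \<bar>c i\<bar>)) / (c 1 + c 0))^2 /
      (2 * A * ln (2 * A * K / ((c 0)^2 - (1 - (c 0)^2) / (K - 1)))) = radius"
    unfolding radius_def by simp
  show ?thesis
    unfolding radius_eq
  proof (intro conjI allI impI ballI)
    show "\<exists>\<delta>>0. \<forall>\<Psi>\<in>dicts K. dict_dist K \<Psi> \<Phi> \<le> \<delta> \<longrightarrow> expected_obj K c \<Phi> \<Psi> \<le> expected_obj K c \<Phi> \<Phi>"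
      by (rule expected_obj_local_max)
    fix \<epsilon> \<Psi>
    assume "\<epsilon> < 1/5 \<and> \<epsilon> \<le> radius" "\<Psi> \<in> dicts K" "0 < dict_dist K \<Psi> \<Phi> \<and> dict_dist K \<Psi> \<Phi> \<le> \<epsilon>"
    then show "expected_obj K c \<Phi> \<Psi> < expected_obj K c \<Phi> \<Phi>"
      by (intro expected_obj_strict_decrease[of \<Psi> \<epsilon>]) auto
  qed
qed

end
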